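(* Let $F:\mathbb{R}^N\times\mathbb{R}\to\mathbb{R}$ be a generating family for a Legendrian knot with $F(x,t)=x_1$ outside a compact subset of $\mathbb{R}^N\times\mathbb{R}$, and let $w(x,y,t)=F(x,t)-F(y,t)$ on $\mathbb{R}^{2N}\times\mathbb{R}$. Then there exists a fiber preserving diffeomorphism $\varphi:\mathbb{R}^{2N}\times\mathbb{R}\to\mathbb{R}^{2N}\times\mathbb{R}$, $\varphi(x,y,t)=(\Phi(x,y,t),t)$, such that $\alpha=w\circ\varphi$ satisfies $\alpha(x,y,t)=x_1-y_1$ outside a compact subset.
   Context: A generating family: a smooth $F:\mathbb{R}^N\times\mathbb{R}\to\mathbb{R}$, $f_t=F(\cdot,t)$, with $0$ a regular value of $(\partial F/\partial x_1,\dots,\partial F/\partial x_N)$; its fiberwise critical set is immersed as a Legendrian curve in $(\mathbb{R}^3,\ker(dz-y\,dx))$ by $(x,t)\mapsto(t,\partial F/\partial t,F)$. Coordinates on $\mathbb{R}^{2N}$ are $(x,y)$ with $x,y\in\mathbb{R}^N$. *)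

theory Defs
  imports "HOL-Analysis.Analysis"
begin

definition iter_dderiv :: "'a::real_normed_vector list \<Rightarrow> ('a \<Rightarrow> 'b::real_normed_vector) \<Rightarrow> 'a \<Rightarrow> 'b" where
  "iter_dderiv vs f = foldr (\<lambda>v g. \<lambda>x. frechet_derivative g (at x) v) vs f"

definition smooth :: "('a::euclidean_space \<Rightarrow> 'b::real_normed_vector) \<Rightarrow> bool" where
  "smooth f \<longleftrightarrow> (\<forall>vs x. iter_dderiv vs f differentiable (at x))"

definition diffeomorphism :: "('a::euclidean_space \<Rightarrow> 'a) \<Rightarrow> bool" where
  "diffeomorphism \<phi> \<longleftrightarrow> (\<exists>\<psi>. smooth \<phi> \<and> smooth \<psi> \<and> (\<forall>p. \<psi> (\<phi> p) = p) \<and> (\<forall>p. \<phi> (\<psi> p) = p))"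

definition fib_grad :: "((real^'n) \<times> real \<Rightarrow> real) \<Rightarrow> (real^'n) \<times> real \<Rightarrow> real^'n" where
  "fib_grad F p = (\<chi> i. frechet_derivative F (at p) (axis i 1, 0))"

definition t_deriv :: "((real^'n) \<times> real \<Rightarrow> real) \<Rightarrow> (real^'n) \<times> real \<Rightarrow> real" where
  "t_deriv F p = frechet_derivative F (at p) (0, 1)"

definition fib_crit :: "((real^'n) \<times> real \<Rightarrow> real) \<Rightarrow> ((real^'n) \<times> real) set" where
  "fib_crit F = {p. fib_grad F p = 0}"

text \<open>Generating family: smooth, and 0 is a regular value of the fiber derivative.\<close>
definition generating_family :: "((real^'n) \<times> real \<Rightarrow> real) \<Rightarrow> bool" where
  "generating_family F \<longleftrightarrow> smooth F \<and>
     (\<forall>p \<in> fib_crit F. surj (frechet_derivative (fib_grad F) (at p)))"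

definition legendrian_map :: "((real^'n) \<times> real \<Rightarrow> real) \<Rightarrow> (real^'n) \<times> real \<Rightarrow> real \<times> real \<times> real" where
  "legendrian_map F p = (snd p, t_deriv F p, F p)"

definition generates_legendrian_knot :: "((real^'n) \<times> real \<Rightarrow> real) \<Rightarrow> bool" where
  "generates_legendrian_knot F \<longleftrightarrow> generating_family F \<and> fib_crit F \<noteq> {} \<and>
     connected (fib_crit F) \<and> inj_on (legendrian_map F) (fib_crit F)"

end

theory Submission
  imports Defs
begin

text \<open>Write \<open>F (z, t) = z$k + c (z, t)\<close> with \<open>c\<close> smooth and compactly supported, and let \<open>e\<close> be
  the \<open>k\<close>-th unit vector. The shears \<open>(x, y, t) \<mapsto> (x + c (y, t) e, y, t)\<close> and
  \<open>(x, y, t) \<mapsto> (x, y + c (x, t) e, t)\<close> are fibre preserving diffeomorphisms, each inverted by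
  replacing \<open>c\<close> with \<open>-c\<close>. For their composite \<open>(x, y, t) \<mapsto> (x\<^sub>1, y\<^sub>1, t)\<close> the terms
  \<open>c (x\<^sub>1, t)\<close> cancel and \<open>w (x\<^sub>1, y\<^sub>1, t) = x$k - y$k + c (y, t) - c (y\<^sub>1, t)\<close>. Far away either
  \<open>t\<close> leaves the support, or \<open>x\<close> is so large that \<open>c (x\<^sub>1, t) = 0\<close> and \<open>y\<^sub>1 = y\<close>, or \<open>y\<close> is so
  large that \<open>y\<close> and \<open>y\<^sub>1\<close> both lie outside the support; in each case the error term vanishes.\<close>

fun differentiable_upto :: "nat \<Rightarrow> ('a::real_normed_vector \<Rightarrow> 'b::real_normed_vector) \<Rightarrow> bool" where
  "differentiable_upto 0 f = True"
| "differentiable_upto (Suc n) f \<longleftrightarrow> (\<forall>x. f differentiable (at x)) \<and>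
     (\<forall>v. differentiable_upto n (\<lambda>x. frechet_derivative f (at x) v))"

lemma differentiable_upto_has_derivative:
  "differentiable_upto (Suc n) f \<Longrightarrow> (f has_derivative frechet_derivative f (at x)) (at x)"
  using frechet_derivative_works by auto

lemma differentiable_upto_Suc_imp:
  "differentiable_upto (Suc n) f \<Longrightarrow> differentiable_upto n f"
  by (induction n arbitrary: f) auto

lemma iter_dderiv_snoc:
  "iter_dderiv (vs @ [v]) f = iter_dderiv vs (\<lambda>x. frechet_derivative f (at x) v)"
  by (simp add: iter_dderiv_def)

lemma iter_dderiv_differentiable:
  "differentiable_upto n f \<Longrightarrow> length vs < n \<Longrightarrow> iter_dderiv vs f differentiable (at x)"
proof (induction n arbitrary: f vs)
  case (Suc n)
  show ?case
  proof (cases vs rule: rev_exhaust)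
    case Nil
    with Suc.prems show ?thesis by (simp add: iter_dderiv_def)
  next
    case (snoc us v)
    with Suc show ?thesis by (simp add: iter_dderiv_snoc)
  qed
qed simp

lemma smooth_iff_differentiable_upto:
  "smooth f \<longleftrightarrow> (\<forall>n. differentiable_upto n f)"
proof
  show "smooth f" if "\<forall>n. differentiable_upto n f"
    using that iter_dderiv_differentiable unfolding smooth_def by (meson lessI)
  show "\<forall>n. differentiable_upto n f" if "smooth f"
  proof
    fix n show "differentiable_upto n f"
      using that
    proof (induction n arbitrary: f)
      case (Suc n)
      have "f differentiable (at x)" for x
        using Suc.prems iter_dderiv_def unfolding smooth_def by (metis foldr_Nil id_apply)
      moreover have "smooth (\<lambda>x. frechet_derivative f (at x) v)" for v
        using Suc.prems unfolding smooth_def by (metis iter_dderiv_snoc)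
      ultimately show ?case using Suc.IH by simp
    qed simp
  qed
qed

lemma smooth_imp_continuous_on: "smooth f \<Longrightarrow> continuous_on S f"
  by (metis smooth_iff_differentiable_upto differentiable_upto.simps(2) differentiable_imp_continuous_on
      differentiable_on_def differentiable_at_imp_differentiable_on)

lemma differentiable_upto_const: "differentiable_upto n (\<lambda>x. c)"
  by (induction n arbitrary: c) simp_all

lemma differentiable_upto_bounded_linear:
  assumes L: "bounded_linear L"
  shows "differentiable_upto n L"
proof (cases n)
  case (Suc m)
  have "frechet_derivative L (at x) = L" for x
    by (rule frechet_derivative_at[OF bounded_linear_imp_has_derivative[OF L], symmetric])
  with Suc L show ?thesis
    by (auto simp: differentiable_def differentiable_upto_const intro: bounded_linear_imp_has_derivative)
qed simp

lemma differentiable_upto_add: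
  "differentiable_upto n f \<Longrightarrow> differentiable_upto n g \<Longrightarrow> differentiable_upto n (\<lambda>x. f x + g x)"
proof (induction n arbitrary: f g)
  case (Suc n)
  have "frechet_derivative (\<lambda>x. f x + g x) (at x) =
      (\<lambda>v. frechet_derivative f (at x) v + frechet_derivative g (at x) v)" for x
    by (rule frechet_derivative_at[symmetric], intro has_derivative_add
        differentiable_upto_has_derivative[OF Suc.prems(1)] differentiable_upto_has_derivative[OF Suc.prems(2)])
  with Suc show ?case by (simp add: differentiable_add)
qed simp

lemma differentiable_upto_scaleR:
  fixes a :: "'a::real_normed_vector \<Rightarrow> real"
  shows "differentiable_upto n a \<Longrightarrow> differentiable_upto n b \<Longrightarrow>
    differentiable_upto n (\<lambda>x. a x *\<^sub>R b x)"
proof (induction n arbitrary: a b)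
  case (Suc n)
  have "frechet_derivative (\<lambda>x. a x *\<^sub>R b x) (at x) =
      (\<lambda>v. a x *\<^sub>R frechet_derivative b (at x) v + frechet_derivative a (at x) v *\<^sub>R b x)" for x
    by (rule frechet_derivative_at[symmetric], intro has_derivative_scaleR
        differentiable_upto_has_derivative[OF Suc.prems(1)] differentiable_upto_has_derivative[OF Suc.prems(2)])
  moreover have "differentiable_upto n a" "differentiable_upto n b"
    using Suc.prems differentiable_upto_Suc_imp by blast+
  ultimately show ?case
    using Suc by (simp add: differentiable_scaleR differentiable_upto_add)
qed simp

lemma differentiable_upto_bounded_linear_compose:
  "bounded_linear L \<Longrightarrow> differentiable_upto n f \<Longrightarrow> differentiable_upto n (\<lambda>x. L (f x))"
proof (induction n arbitrary: f)
  case (Suc n)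
  have deriv: "((\<lambda>x. L (f x)) has_derivative (\<lambda>v. L (frechet_derivative f (at x) v))) (at x)" for x
    using bounded_linear.has_derivative[OF Suc.prems(1) differentiable_upto_has_derivative[OF Suc.prems(2)]] .
  then have "frechet_derivative (\<lambda>x. L (f x)) (at x) = (\<lambda>v. L (frechet_derivative f (at x) v))" for x
    by (simp add: frechet_derivative_at[symmetric])
  with Suc deriv show ?case
    by (auto simp: differentiable_def)
qed simp

lemma differentiable_upto_sum:
  "finite I \<Longrightarrow> (\<And>i. i \<in> I \<Longrightarrow> differentiable_upto n (f i)) \<Longrightarrow>
    differentiable_upto n (\<lambda>x. \<Sum>i\<in>I. f i x)"
  by (induction I rule: finite_induct) (simp_all add: differentiable_upto_const differentiable_upto_add)

lemma linear_basis_expansion: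
  assumes "linear (G::'a::euclidean_space \<Rightarrow> 'b::real_vector)"
  shows "G w = (\<Sum>i\<in>Basis. (w \<bullet> i) *\<^sub>R G i)"
proof -
  have "G w = G (\<Sum>i\<in>Basis. (w \<bullet> i) *\<^sub>R i)" by (simp add: euclidean_representation)
  also have "\<dots> = (\<Sum>i\<in>Basis. (w \<bullet> i) *\<^sub>R G i)"
    using assms by (simp add: linear_sum linear_scale o_def)
  finally show ?thesis .
qed

text \<open>Expanding the inner derivative in a basis writes the derivative of \<open>g \<circ> f\<close> as a finite sum of
  products of derivatives of \<open>f\<close> and of \<open>g\<close> composed with \<open>f\<close>, so that induction applies.\<close>
lemma differentiable_upto_compose:
  fixes f :: "'a::real_normed_vector \<Rightarrow> 'c::euclidean_space" and g :: "'c \<Rightarrow> 'b::real_normed_vector"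
  shows "differentiable_upto n f \<Longrightarrow> differentiable_upto n g \<Longrightarrow> differentiable_upto n (\<lambda>x. g (f x))"
proof (induction n arbitrary: f g)
  case (Suc n)
  let ?Df = "\<lambda>x. frechet_derivative f (at x)" and ?Dg = "\<lambda>y. frechet_derivative g (at y)"
  have chain: "((\<lambda>x. g (f x)) has_derivative ?Dg (f x) \<circ> ?Df x) (at x)" for x
    using diff_chain_at[OF differentiable_upto_has_derivative[OF Suc.prems(1)]
        differentiable_upto_has_derivative[OF Suc.prems(2)]] by (simp add: o_def)
  have expand: "frechet_derivative (\<lambda>x. g (f x)) (at x) v =
      (\<Sum>i\<in>Basis. (?Df x v \<bullet> i) *\<^sub>R ?Dg (f x) i)" for x v
  proof -
    have "frechet_derivative (\<lambda>x. g (f x)) (at x) v = ?Dg (f x) (?Df x v)"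
      using frechet_derivative_at[OF chain, symmetric] by simp
    also have "\<dots> = (\<Sum>i\<in>Basis. (?Df x v \<bullet> i) *\<^sub>R ?Dg (f x) i)"
      by (rule linear_basis_expansion[OF has_derivative_linear[OF differentiable_upto_has_derivative[OF Suc.prems(2)]]])
    finally show ?thesis .
  qed
  have "differentiable_upto n (\<lambda>x. frechet_derivative (\<lambda>x. g (f x)) (at x) v)" for v
    unfolding expand
  proof (intro differentiable_upto_sum differentiable_upto_scaleR finite_Basis)
    fix i :: 'c
    show "differentiable_upto n (\<lambda>x. ?Df x v \<bullet> i)"
      by (rule differentiable_upto_bounded_linear_compose[OF bounded_linear_inner_left])
        (use Suc.prems(1) in simp)
    show "differentiable_upto n (\<lambda>x. ?Dg (f x) i)"
      using Suc.IH[of f "\<lambda>y. ?Dg y i"] differentiable_upto_Suc_imp[OF Suc.prems(1)] Suc.prems(2)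
      by simp
  qed
  with chain show ?case by (auto simp: differentiable_def)
qed simp

lemma smooth_add: "smooth f \<Longrightarrow> smooth g \<Longrightarrow> smooth (\<lambda>x. f x + g x)"
  by (simp add: smooth_iff_differentiable_upto differentiable_upto_add)

lemma smooth_bounded_linear: "bounded_linear L \<Longrightarrow> smooth L"
  by (simp add: smooth_iff_differentiable_upto differentiable_upto_bounded_linear)

lemma smooth_compose: "smooth f \<Longrightarrow> smooth g \<Longrightarrow> smooth (g \<circ> f)"
  by (simp add: smooth_iff_differentiable_upto differentiable_upto_compose o_def)

lemma diffeomorphism_compose:
  assumes "diffeomorphism f" "diffeomorphism g"
  shows "diffeomorphism (g \<circ> f)"
proof -
  obtain f' g' where "smooth f" "smooth f'" "\<forall>p. f' (f p) = p" "\<forall>p. f (f' p) = p"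
    and "smooth g" "smooth g'" "\<forall>p. g' (g p) = p" "\<forall>p. g (g' p) = p"
    using assms unfolding diffeomorphism_def by blast
  then show ?thesis
    unfolding diffeomorphism_def by (intro exI[of _ "f' \<circ> g'"]) (simp add: smooth_compose)
qed

lemma smooth_shear:
  assumes "bounded_linear P" "smooth c"
  shows "smooth (\<lambda>p. p + (s * c (P p)) *\<^sub>R v)"
proof -
  have "differentiable_upto n (\<lambda>p. c (P p))" for n
    using assms differentiable_upto_compose[of n P c] differentiable_upto_bounded_linear
    unfolding smooth_iff_differentiable_upto by blast
  then have "differentiable_upto n (\<lambda>p. (s * c (P p)) *\<^sub>R v)" for n
    by (intro differentiable_upto_scaleR differentiable_upto_const
        differentiable_upto_bounded_linear_compose[OF bounded_linear_mult_right])
  then have "smooth (\<lambda>p. (s * c (P p)) *\<^sub>R v)"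
    by (simp add: smooth_iff_differentiable_upto)
  then show ?thesis
    using smooth_add[OF smooth_bounded_linear[OF bounded_linear_ident]] by blast
qed

definition shear_fst :: "('v::real_normed_vector \<times> real \<Rightarrow> real) \<Rightarrow> 'v \<Rightarrow> real \<Rightarrow>
    ('v \<times> 'v) \<times> real \<Rightarrow> ('v \<times> 'v) \<times> real" where
  "shear_fst c v a p = p + (a * c (snd (fst p), snd p)) *\<^sub>R ((v, 0), 0)"

definition shear_snd :: "('v::real_normed_vector \<times> real \<Rightarrow> real) \<Rightarrow> 'v \<Rightarrow> real \<Rightarrow>
    ('v \<times> 'v) \<times> real \<Rightarrow> ('v \<times> 'v) \<times> real" where
  "shear_snd c v a p = p + (a * c (fst (fst p), snd p)) *\<^sub>R ((0, v), 0)"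

lemma shear_fst_apply [simp]: "shear_fst c v a ((x, y), t) = ((x + (a * c (y, t)) *\<^sub>R v, y), t)"
  by (simp add: shear_fst_def)

lemma shear_snd_apply [simp]: "shear_snd c v a ((x, y), t) = ((x, y + (a * c (x, t)) *\<^sub>R v), t)"
  by (simp add: shear_snd_def)

lemma shear_fst_inverse: "shear_fst c v (- a) (shear_fst c v a p) = p"
  by (cases p) auto

lemma shear_snd_inverse: "shear_snd c v (- a) (shear_snd c v a p) = p"
  by (cases p) auto

lemma diffeomorphism_shear_fst:
  fixes c :: "'v::euclidean_space \<times> real \<Rightarrow> real"
  assumes "smooth c"
  shows "diffeomorphism (shear_fst c v a)"
proof -
  have "bounded_linear (\<lambda>p::('v \<times> 'v) \<times> real. (snd (fst p), snd p))"
    by (intro bounded_linear_Pair bounded_linear_compose[OF bounded_linear_snd bounded_linear_fst]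
        bounded_linear_snd)
  then have "smooth (shear_fst c v b)" for b
    unfolding shear_fst_def using smooth_shear[OF _ assms] by blast
  then show ?thesis
    unfolding diffeomorphism_def
    using shear_fst_inverse[of c v a] shear_fst_inverse[of c v "- a"]
    by (intro exI[of _ "shear_fst c v (- a)"]) simp
qed

lemma diffeomorphism_shear_snd:
  fixes c :: "'v::euclidean_space \<times> real \<Rightarrow> real"
  assumes "smooth c"
  shows "diffeomorphism (shear_snd c v a)"
proof -
  have "bounded_linear (\<lambda>p::('v \<times> 'v) \<times> real. (fst (fst p), snd p))"
    by (intro bounded_linear_Pair bounded_linear_compose[OF bounded_linear_fst bounded_linear_fst]
        bounded_linear_snd)
  then have "smooth (shear_snd c v b)" for b
    unfolding shear_snd_def using smooth_shear[OF _ assms] by blast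
  then show ?thesis
    unfolding diffeomorphism_def
    using shear_snd_inverse[of c v a] shear_snd_inverse[of c v "- a"]
    by (intro exI[of _ "shear_snd c v (- a)"]) simp
qed

lemma compact_support_bounds:
  fixes c :: "'v::real_normed_vector \<times> real \<Rightarrow> real"
  assumes "continuous_on UNIV c" "compact K" "\<And>p. p \<notin> K \<Longrightarrow> c p = 0"
  obtains M R where "\<And>p. \<bar>c p\<bar> \<le> M" "\<And>z t. norm z > R \<or> \<bar>t\<bar> > R \<Longrightarrow> c (z, t) = 0"
proof -
  have image: "compact (c ` K)"
    using assms(2) by (rule compact_continuous_image[OF continuous_on_subset[OF assms(1) subset_UNIV]])
  then obtain M where M: "\<And>z. z \<in> c ` K \<Longrightarrow> norm z \<le> M"
    using compact_imp_bounded[OF image] unfolding bounded_iff by blast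
  obtain R where R: "\<And>p. p \<in> K \<Longrightarrow> norm p \<le> R"
    using compact_imp_bounded[OF assms(2)] unfolding bounded_iff by blast
  show ?thesis
  proof
    show "\<bar>c p\<bar> \<le> max M 0" for p
      using M[of "c p"] assms(3)[of p] by (cases "p \<in> K") auto
    show "c (z, t) = 0" if "norm z > R \<or> \<bar>t\<bar> > R" for z t
    proof (rule assms(3), rule notI)
      assume "(z, t) \<in> K"
      then have "norm (z, t) \<le> R" by (rule R)
      with that norm_fst_le[of z t] norm_snd_le[of t z] show False by auto
    qed
  qed
qed

lemma shear_pair_cancel:
  fixes c :: "'v::real_normed_vector \<times> real \<Rightarrow> real"
  assumes bound: "\<And>p. \<bar>c p\<bar> \<le> M"
    and support: "\<And>z t. norm z > R \<or> \<bar>t\<bar> > R \<Longrightarrow> c (z, t) = 0"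
    and "norm v = 1"
    and far: "((x, y), t) \<notin> (cball 0 (R + M) \<times> cball 0 (R + M)) \<times> cball 0 R"
  shows "c (y + c (x + c (y, t) *\<^sub>R v, t) *\<^sub>R v, t) = c (y, t)"
proof -
  let ?x1 = "x + c (y, t) *\<^sub>R v"
  let ?y1 = "y + c (?x1, t) *\<^sub>R v"
  have shift: "norm (z + c p *\<^sub>R v) \<ge> norm z - M" for z p
    using norm_triangle_ineq4[of "z + c p *\<^sub>R v" "c p *\<^sub>R v"] bound[of p] \<open>norm v = 1\<close> by auto
  have "M \<ge> 0" using bound[of undefined] by linarith
  consider "\<bar>t\<bar> > R" | "norm x > R + M" | "norm y > R + M"
    using far by (auto simp: not_le)
  then show ?thesis
  proof cases
    case 1
    then have "c (y, t) = 0" "c (?y1, t) = 0" using support by blast+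
    then show ?thesis by linarith
  next
    case 2
    then have "norm ?x1 > R" using shift[of x "(y, t)"] by linarith
    then have "c (?x1, t) = 0" using support by blast
    then show ?thesis by simp
  next
    case 3
    then have "norm y > R" "norm ?y1 > R" using shift[of y "(?x1, t)"] \<open>M \<ge> 0\<close> by linarith+
    then have "c (y, t) = 0" "c (?y1, t) = 0" using support by blast+
    then show ?thesis by linarith
  qed
qed

theorem proposition6p6:
  fixes F :: "(real^'n) \<times> real \<Rightarrow> real" and k :: 'n
  assumes "generates_legendrian_knot F"
    and "\<exists>K. compact K \<and> (\<forall>p. p \<notin> K \<longrightarrow> F p = fst p $ k)"
  shows "\<exists>\<phi> :: ((real^'n) \<times> (real^'n)) \<times> real \<Rightarrow> ((real^'n) \<times> (real^'n)) \<times> real.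
           diffeomorphism \<phi> \<and> (\<forall>p. snd (\<phi> p) = snd p) \<and>
           (\<exists>K. compact K \<and> (\<forall>x y t. ((x, y), t) \<notin> K \<longrightarrow>
               (let ((x', y'), t') = \<phi> ((x, y), t) in F (x', t') - F (y', t')) = x $ k - y $ k))"
proof -
  obtain K where "compact K" and F_outside: "\<And>p. p \<notin> K \<Longrightarrow> F p = fst p $ k"
    using assms(2) by blast
  have "smooth F"
    using assms(1) unfolding generates_legendrian_knot_def generating_family_def by blast
  define c where "c p = F p - fst p $ k" for p
  define e :: "real^'n" where "e = axis k 1"
  have F_eq: "F (z, t) = z $ k + c (z, t)" for z t by (simp add: c_def)
  have "smooth c"
    unfolding c_def diff_conv_add_uminus
    by (intro smooth_add \<open>smooth F\<close> smooth_bounded_linear bounded_linear_minus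
        bounded_linear_compose[OF bounded_linear_vec_nth bounded_linear_fst])
  moreover have "c p = 0" if "p \<notin> K" for p
    using F_outside[OF that] by (simp add: c_def)
  ultimately obtain M R where bound: "\<And>p. \<bar>c p\<bar> \<le> M"
    and support: "\<And>z t. norm z > R \<or> \<bar>t\<bar> > R \<Longrightarrow> c (z, t) = 0"
    using compact_support_bounds[OF smooth_imp_continuous_on \<open>compact K\<close>] by blast
  define \<phi> where "\<phi> = shear_snd c e 1 \<circ> shear_fst c e 1"
  have "diffeomorphism \<phi>"
    unfolding \<phi>_def by (intro diffeomorphism_compose diffeomorphism_shear_fst diffeomorphism_shear_snd \<open>smooth c\<close>)
  moreover have "snd (\<phi> p) = snd p" for p
    by (simp add: \<phi>_def shear_fst_def shear_snd_def)
  moreover have "compact ((cball 0 (R + M) \<times> cball 0 (R + M)) \<times> cball 0 R :: (((real^'n) \<times> (real^'n)) \<times> real) set)"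
    by (intro compact_Times compact_cball)
  moreover have "(let ((x', y'), t') = \<phi> ((x, y), t) in F (x', t') - F (y', t')) = x $ k - y $ k"
    if "((x, y), t) \<notin> (cball 0 (R + M) \<times> cball 0 (R + M)) \<times> cball 0 R" for x y t
    using shear_pair_cancel[of c M R e, OF bound support _ that]
    by (simp add: \<phi>_def F_eq e_def algebra_simps)
  ultimately show ?thesis by blast
qed

end
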